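(* Every cyclic triangulation of a closed surface is $q$-equivelar for some $q$ with either $q=3k$ or $q=3k+1$ for some integer $k\ge 1$.
   Context: For an integer $n\ge 3$ identify a vertex set with $\mathbb{Z}_n=\{0,1,\dots,n-1\}$. A cyclic triangulation with $n$ vertices is a simplicial complex on the vertex set $\mathbb{Z}_n$ that triangulates a closed (compact, connected, boundaryless) surface and is invariant under the shift $i\mapsto i+1$. A triangulation is $q$-equivelar if every vertex lies in exactly $q$ triangles. *)

theory Defs
  imports Main
begin

text \<open>A 2-dimensional simplicial complex on vertex set Z_n = {0..<n} is given by its
set F of facets (triangles, 3-element subsets of {0..<n}). It triangulates a closed
surface (combinatorial closed 2-manifold) iff: every vertex of Z_n lies in a triangle,
every edge lies in exactly two triangles, the link of every vertex is connected
(hence a cycle), and the complex is connected.\<close>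

definition shift :: "nat \<Rightarrow> nat set \<Rightarrow> nat set" where
  "shift n T = (\<lambda>x. (x + 1) mod n) ` T"

definition closed_surface_triangulation :: "nat \<Rightarrow> nat set set \<Rightarrow> bool" where
  "closed_surface_triangulation n F \<longleftrightarrow>
     (\<forall>T\<in>F. T \<subseteq> {0..<n} \<and> card T = 3)
   \<and> (\<forall>v<n. \<exists>T\<in>F. v \<in> T)
   \<and> (\<forall>T\<in>F. \<forall>e. e \<subseteq> T \<and> card e = 2 \<longrightarrow> card {S\<in>F. e \<subseteq> S} = 2)
   \<and> (\<forall>v<n. \<forall>a\<in>\<Union>{S\<in>F. v \<in> S} - {v}. \<forall>b\<in>\<Union>{S\<in>F. v \<in> S} - {v}.
          (\<lambda>x y. {v, x, y} \<in> F)\<^sup>*\<^sup>* a b)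
   \<and> (\<forall>u<n. \<forall>w<n. (\<lambda>x y. \<exists>T\<in>F. x \<in> T \<and> y \<in> T)\<^sup>*\<^sup>* u w)"

definition cyclic_triangulation :: "nat \<Rightarrow> nat set set \<Rightarrow> bool" where
  "cyclic_triangulation n F \<longleftrightarrow> 3 \<le> n \<and> closed_surface_triangulation n F
     \<and> (\<forall>T\<in>F. shift n T \<in> F)"

definition equivelar :: "nat \<Rightarrow> nat set set \<Rightarrow> nat \<Rightarrow> bool" where
  "equivelar n F q \<longleftrightarrow> (\<forall>v<n. card {T\<in>F. v \<in> T} = q)"

end

theory Submission
  imports Defs
begin

(*
  In a cyclic triangulation the shift i \<mapsto> i + 1 is an automorphism, so every
  rotation i \<mapsto> i + k (mod n) maps facets to facets; in particular it carries the star of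
  vertex 0 bijectively onto the star of vertex v.  Hence all vertex degrees equal
  q = card (star F 0), i.e. the triangulation is q-equivelar.

  The triangles through 0 correspond to the pairs 0 < a < b < n with {0, a, b} a facet.
  Rotating the triangle {0, a, b} by -a gives the triangle {0, b - a, n - a}, so
  (a, b) \<mapsto> (b - a, n - a) is a map of order 3 on these pairs.  A map of order 3 on a
  finite set has as many points as fixed points modulo 3, and the only possible fixed
  point is (n/3, 2n/3).  Thus q mod 3 \<in> {0, 1}.  Finally every edge at 0 lies in two
  triangles, so q \<ge> 2, which excludes q = 1 and gives q = 3k or q = 3k + 1 with k \<ge> 1.
*)

text \<open>A self-map of order 3 on a finite set partitions it into orbits of size 1 or 3,
  so the cardinality agrees with the number of fixed points modulo 3.\<close>

lemma card_mod_3_fixed_points: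
  assumes "finite S"
    and "\<And>x. x \<in> S \<Longrightarrow> f x \<in> S"
    and "\<And>x. x \<in> S \<Longrightarrow> f (f (f x)) = x"
  shows "card S mod 3 = card {x\<in>S. f x = x} mod 3"
  using assms
proof (induction "card S" arbitrary: S rule: less_induct)
  case less
  show ?case
  proof (cases "\<forall>x\<in>S. f x = x")
    case True
    then have "{x\<in>S. f x = x} = S" by auto
    then show ?thesis by simp
  next
    case False
    then obtain x where x: "x \<in> S" "f x \<noteq> x" by auto
    have fx: "f x \<in> S" "f (f x) \<in> S" "f (f (f x)) = x" using less.prems x by auto
    then have distinct: "f (f x) \<noteq> x" "f (f x) \<noteq> f x" using x by metis+
    define Orb where "Orb = {x, f x, f (f x)}"
    have card_Orb: "card Orb = 3" using x distinct by (simp add: Orb_def)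
    have Orb_sub: "Orb \<subseteq> S" using x fx by (simp add: Orb_def)
    have Orb_closed: "f z \<in> Orb" if "z \<in> Orb" for z using that fx by (auto simp: Orb_def)
    text \<open>The complement of the orbit is again closed under f, since f z \<in> Orb forces
      z = f (f (f z)) \<in> Orb.\<close>
    have rest_closed: "f y \<in> S - Orb" if "y \<in> S - Orb" for y
    proof -
      have "f y \<notin> Orb"
      proof
        assume "f y \<in> Orb"
        have "y = f (f (f y))" using that less.prems(3) by simp
        also have "\<dots> \<in> Orb" using \<open>f y \<in> Orb\<close> Orb_closed by blast
        finally show False using that by simp
      qed
      then show ?thesis using that less.prems(2) by auto
    qed
    have card_S: "card S = card (S - Orb) + 3"
      using card_Diff_subset[OF finite_subset[OF Orb_sub less.prems(1)] Orb_sub]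
        card_mono[OF less.prems(1) Orb_sub] card_Orb by simp
    have fixed_eq: "{y\<in>S. f y = y} = {y\<in>S - Orb. f y = y}"
      using x distinct fx by (auto simp: Orb_def)
    have "card (S - Orb) mod 3 = card {y\<in>S - Orb. f y = y} mod 3"
      using less.hyps[of "S - Orb"] card_S less.prems rest_closed by simp
    then show ?thesis using card_S fixed_eq by simp
  qed
qed

lemma facet_subset:
  assumes "cyclic_triangulation n F" "T \<in> F"
  shows "T \<subseteq> {0..<n}" and "card T = 3"
  using assms by (auto simp: cyclic_triangulation_def closed_surface_triangulation_def)

lemma finite_facets:
  assumes "cyclic_triangulation n F"
  shows "finite F"
  by (rule finite_subset[of F "Pow {0..<n}"]) (use facet_subset[OF assms] in auto)

definition rotate_vertices :: "nat \<Rightarrow> nat \<Rightarrow> nat set \<Rightarrow> nat set" where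
  "rotate_vertices n k T = (\<lambda>x. (x + k) mod n) ` T"

text \<open>Every rotation is an iterate of the shift, hence preserves the facet set.\<close>

lemma rotate_vertices_facet:
  assumes "cyclic_triangulation n F" "T \<in> F"
  shows "rotate_vertices n k T \<in> F"
proof (induction k)
  case 0
  have "rotate_vertices n 0 T = T"
    using facet_subset(1)[OF assms] by (force simp: rotate_vertices_def)
  then show ?case using assms(2) by simp
next
  case (Suc k)
  have "shift n (rotate_vertices n k T) = rotate_vertices n (Suc k) T"
    unfolding shift_def rotate_vertices_def image_image by (simp add: mod_Suc_eq)
  moreover have "shift n (rotate_vertices n k T) \<in> F"
    using Suc assms(1) by (simp add: cyclic_triangulation_def)
  ultimately show ?case by simp
qed

lemma rotate_vertices_inverse:
  assumes "T \<subseteq> {0..<n}" "k \<le> n"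
  shows "rotate_vertices n (n - k) (rotate_vertices n k T) = T"
proof -
  have "((x + k) mod n + (n - k)) mod n = x" if "x < n" for x
  proof -
    have "((x + k) mod n + (n - k)) mod n = (x + k + (n - k)) mod n"
      by (simp only: mod_add_left_eq)
    also have "x + k + (n - k) = x + n" using assms(2) by simp
    finally show ?thesis using that by simp
  qed
  then have "(\<lambda>x. ((x + k) mod n + (n - k)) mod n) ` T = (\<lambda>x. x) ` T"
    using assms(1) by (intro image_cong) auto
  then show ?thesis unfolding rotate_vertices_def image_image by simp
qed

definition star :: "nat set set \<Rightarrow> nat \<Rightarrow> nat set set" where
  "star F v = {T\<in>F. v \<in> T}"

text \<open>Rotation by v maps the star of 0 bijectively onto the star of v.\<close>

lemma card_star_eq:
  assumes cyc: "cyclic_triangulation n F" and "v < n"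
  shows "card (star F v) = card (star F 0)"
proof -
  have "bij_betw (rotate_vertices n v) (star F 0) (star F v)"
  proof (rule bij_betw_byWitness[where f' = "rotate_vertices n (n - v)"])
    show "\<forall>T\<in>star F 0. rotate_vertices n (n - v) (rotate_vertices n v T) = T"
      using rotate_vertices_inverse facet_subset(1)[OF cyc] \<open>v < n\<close> by (simp add: star_def)
    show "\<forall>T\<in>star F v. rotate_vertices n v (rotate_vertices n (n - v) T) = T"
    proof
      fix T assume "T \<in> star F v"
      then have "T \<subseteq> {0..<n}" using facet_subset(1)[OF cyc] by (auto simp: star_def)
      then show "rotate_vertices n v (rotate_vertices n (n - v) T) = T"
        using rotate_vertices_inverse[of T n "n - v"] \<open>v < n\<close> by simp
    qed
    have "(0 + v) mod n = v" "(v + (n - v)) mod n = 0" using \<open>v < n\<close> by simp_all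
    then show "rotate_vertices n v ` star F 0 \<subseteq> star F v"
      and "rotate_vertices n (n - v) ` star F v \<subseteq> star F 0"
      using rotate_vertices_facet[OF cyc] by (force simp: star_def rotate_vertices_def)+
  qed
  then show ?thesis by (simp add: bij_betw_same_card)
qed

lemma equivelar_star_0:
  assumes "cyclic_triangulation n F"
  shows "equivelar n F (card (star F 0))"
  unfolding equivelar_def star_def[symmetric] using card_star_eq[OF assms] by blast

text \<open>Every edge lies in two triangles, so every vertex has degree at least 2.\<close>

lemma card_star_ge_2:
  assumes cyc: "cyclic_triangulation n F" and "v < n"
  shows "2 \<le> card (star F v)"
proof -
  have surf: "closed_surface_triangulation n F" using cyc by (simp add: cyclic_triangulation_def)
  then obtain T where T: "T \<in> F" "v \<in> T"
    using \<open>v < n\<close> by (auto simp: closed_surface_triangulation_def)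
  have "card (T - {v}) = 2" using facet_subset(2)[OF cyc T(1)] T(2) by simp
  then have "T - {v} \<noteq> {}" by (metis card.empty zero_neq_numeral)
  then obtain x where x: "x \<in> T" "x \<noteq> v" by blast
  have "{v, x} \<subseteq> T" "card {v, x} = 2" using T x by auto
  moreover have "\<forall>T\<in>F. \<forall>e. e \<subseteq> T \<and> card e = 2 \<longrightarrow> card {S\<in>F. e \<subseteq> S} = 2"
    using surf by (simp add: closed_surface_triangulation_def)
  ultimately have "card {S\<in>F. {v, x} \<subseteq> S} = 2" using T(1) by blast
  moreover have "card {S\<in>F. {v, x} \<subseteq> S} \<le> card (star F v)"
    using finite_facets[OF cyc] by (intro card_mono) (auto simp: star_def)
  ultimately show ?thesis by simp
qed

definition link_pairs :: "nat \<Rightarrow> nat set set \<Rightarrow> (nat \<times> nat) set" where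
  "link_pairs n F = {(a, b). 0 < a \<and> a < b \<and> b < n \<and> {0, a, b} \<in> F}"

lemma card_star_0:
  assumes cyc: "cyclic_triangulation n F"
  shows "card (star F 0) = card (link_pairs n F)"
proof -
  define tri where "tri = (\<lambda>(a::nat, b::nat). {0::nat, a, b})"
  text \<open>The pair is recovered from the triangle as the least and greatest nonzero vertex.\<close>
  have "inj_on tri (link_pairs n F)"
  proof (rule inj_on_inverseI)
    fix p assume "p \<in> link_pairs n F"
    then obtain a b where "p = (a, b)" "0 < a" "a < b" by (auto simp: link_pairs_def)
    moreover from this have "tri p - {0} = {a, b}" by (auto simp: tri_def)
    ultimately show "(\<lambda>T. (Min (T - {0}), Max (T - {0}))) (tri p) = p" by simp
  qed
  moreover have "tri ` link_pairs n F = star F 0"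
  proof
    show "tri ` link_pairs n F \<subseteq> star F 0" by (auto simp: link_pairs_def tri_def star_def)
    show "star F 0 \<subseteq> tri ` link_pairs n F"
    proof
      fix T assume "T \<in> star F 0"
      then have T: "T \<in> F" "0 \<in> T" by (simp_all add: star_def)
      have "card (T - {0}) = 2" using facet_subset(2)[OF cyc T(1)] T(2) by simp
      then obtain x y where xy: "T - {0} = {x, y}" "x \<noteq> y" by (auto simp: card_2_iff)
      define a b where "a = min x y" and "b = max x y"
      have ab: "T - {0} = {a, b}" "a < b"
        using xy by (auto simp: a_def b_def min_def max_def)
      then have "a \<in> T - {0}" "b \<in> T - {0}" by auto
      then have "0 < a" "b < n" using facet_subset(1)[OF cyc T(1)] by auto
      moreover have "T = {0, a, b}" using T(2) ab(1) by blast
      ultimately have "(a, b) \<in> link_pairs n F" "T = tri (a, b)"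
        using T ab by (simp_all add: link_pairs_def tri_def)
      then show "T \<in> tri ` link_pairs n F" by blast
    qed
  qed
  ultimately show ?thesis by (metis card_image)
qed

text \<open>Rotating the triangle {0, a, b} by -a yields {0, b - a, n - a}.\<close>

definition link_rotation :: "nat \<Rightarrow> nat \<times> nat \<Rightarrow> nat \<times> nat" where
  "link_rotation n p = (snd p - fst p, n - fst p)"

lemma link_rotation_maps_to:
  assumes cyc: "cyclic_triangulation n F" and p: "p \<in> link_pairs n F"
  shows "link_rotation n p \<in> link_pairs n F"
proof -
  obtain a b where ab: "p = (a, b)" "0 < a" "a < b" "b < n" "{0, a, b} \<in> F"
    using p by (auto simp: link_pairs_def)
  have "(b + (n - a)) mod n = b - a"
  proof -
    have "(b + (n - a)) mod n = ((b - a) + n) mod n"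
      by (rule arg_cong[where f = "\<lambda>t. t mod n"]) (use ab in simp)
    also have "\<dots> = (b - a) mod n" by (rule mod_add_self2)
    also have "\<dots> = b - a" using ab by simp
    finally show ?thesis .
  qed
  then have "rotate_vertices n (n - a) {0, a, b} = {0, b - a, n - a}"
    using ab by (auto simp: rotate_vertices_def)
  then have "{0, b - a, n - a} \<in> F"
    using rotate_vertices_facet[OF cyc ab(5), of "n - a"] by (simp only:)
  then show ?thesis using ab by (auto simp: link_pairs_def link_rotation_def)
qed

lemma link_rotation_order_3:
  assumes "p \<in> link_pairs n F"
  shows "link_rotation n (link_rotation n (link_rotation n p)) = p"
  using assms by (auto simp: link_pairs_def link_rotation_def)

text \<open>A fixed pair (a, b) satisfies b = 2a and n = 3a, so there is at most one.\<close>

lemma link_rotation_fixed_points: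
  "{p\<in>link_pairs n F. link_rotation n p = p} \<subseteq> {(n div 3, 2 * (n div 3))}"
proof
  fix p assume "p \<in> {p\<in>link_pairs n F. link_rotation n p = p}"
  then obtain a b where "p = (a, b)" "a < b" "b - a = a" "n - a = b"
    by (auto simp: link_pairs_def link_rotation_def)
  then have "n = 3 * a" "b = 2 * a" by linarith+
  then show "p \<in> {(n div 3, 2 * (n div 3))}" using \<open>p = (a, b)\<close> by simp
qed

lemma card_link_pairs_mod_3:
  assumes cyc: "cyclic_triangulation n F"
  shows "card (link_pairs n F) mod 3 \<le> 1"
proof -
  have "finite (link_pairs n F)"
    by (rule finite_subset[of _ "{0..<n} \<times> {0..<n}"]) (auto simp: link_pairs_def)
  then have "card (link_pairs n F) mod 3
      = card {p\<in>link_pairs n F. link_rotation n p = p} mod 3"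
    using link_rotation_maps_to[OF cyc] link_rotation_order_3
    by (rule card_mod_3_fixed_points)
  moreover have "card {p\<in>link_pairs n F. link_rotation n p = p} \<le> 1"
    using card_mono[OF _ link_rotation_fixed_points] by simp
  ultimately show ?thesis by simp
qed

theorem mainTheorem4:
  fixes n :: nat and F :: "nat set set"
  assumes "cyclic_triangulation n F"
  shows "\<exists>q. equivelar n F q \<and> (\<exists>k::nat. k \<ge> 1 \<and> (q = 3 * k \<or> q = 3 * k + 1))"
proof -
  define q where "q = card (star F 0)"
  have "0 < n" using assms by (simp add: cyclic_triangulation_def)
  have equivelar: "equivelar n F q" using equivelar_star_0[OF assms] by (simp add: q_def)
  have "q mod 3 \<le> 1" using card_link_pairs_mod_3[OF assms] card_star_0[OF assms]
    by (simp add: q_def)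
  moreover have "2 \<le> q" using card_star_ge_2[OF assms \<open>0 < n\<close>] by (simp add: q_def)
  moreover have "q = 3 * (q div 3) + q mod 3" by simp
  ultimately have "1 \<le> q div 3 \<and> (q = 3 * (q div 3) \<or> q = 3 * (q div 3) + 1)" by linarith
  then show ?thesis using equivelar by blast
qed

end
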